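(* Let $A$ be a conservative $d$-dim Petri net. For every configuration $x$ of $A$, the reachability set $R(x)=\{y\mid x\xrightarrow{*}y\}$ is finite and contains a bottom SCC $X\subseteq R(x)$. If, moreover, $A$ is structurally live, then $A$ is reversible.
   Context: A $d$-dim Petri net $A$ is a finite set of actions $a=(a_-,a_+)\in\mathbb{N}^d\times\mathbb{N}^d$; configurations are $x\in\mathbb{N}^d$; $x\xrightarrow{a}y$ if $x=c+a_-$, $y=c+a_+$ for some $c\in\mathbb{N}^d$; $\xrightarrow{*}$ is the reflexive-transitive closure. $\Delta(a)=a_+-a_-$. $A$ is conservative if some $w\in(\mathbb{N}_+)^d$ satisfies $\langle\Delta(a),w\rangle=0$ for all $a\in A$. A bottom SCC of $A$ is a nonempty set $X$ of configurations such that $\{y\mid x\xrightarrow{*}y\}=X$ for every $x\in X$. A configuration $x$ is live if for every $a\in A$ and every $x'$ with $x\xrightarrow{*}x'$ there is $y$ with $x'\xrightarrow{*}y\geq a_-$; $A$ is structurally live if it has a live configuration. $A$ is reversible if $-\Delta(a)$ belongs to the set of finite sums of elements of $\{\Delta(b)\mid b\in A\}$ for every $a\in A$. *)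

theory Defs
  imports Main
begin

text \<open>Dimension d is a finite type 'd; configurations are vectors 'd \<Rightarrow> nat;
  an action is a pair (a_minus, a_plus); a Petri net is a finite set of actions.\<close>

type_synonym 'd config = "'d \<Rightarrow> nat"
type_synonym 'd action = "'d config \<times> 'd config"

definition step :: "'d action \<Rightarrow> 'd config \<Rightarrow> 'd config \<Rightarrow> bool" where
  "step a x y \<longleftrightarrow> (\<exists>c. x = (\<lambda>i. c i + fst a i) \<and> y = (\<lambda>i. c i + snd a i))"

definition step_net :: "'d action set \<Rightarrow> 'd config \<Rightarrow> 'd config \<Rightarrow> bool" where
  "step_net A x y \<longleftrightarrow> (\<exists>a\<in>A. step a x y)"

definition reach :: "'d action set \<Rightarrow> 'd config \<Rightarrow> 'd config \<Rightarrow> bool" where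
  "reach A = (step_net A)\<^sup>*\<^sup>*"

definition reach_set :: "'d action set \<Rightarrow> 'd config \<Rightarrow> 'd config set" where
  "reach_set A x = {y. reach A x y}"

definition delta :: "'d action \<Rightarrow> 'd \<Rightarrow> int" where
  "delta a = (\<lambda>i. int (snd a i) - int (fst a i))"

definition conservative :: "('d::finite) action set \<Rightarrow> bool" where
  "conservative A \<longleftrightarrow> (\<exists>w :: 'd \<Rightarrow> nat. (\<forall>i. w i > 0) \<and>
      (\<forall>a\<in>A. (\<Sum>i\<in>UNIV. delta a i * int (w i)) = 0))"

definition bottom_scc :: "'d action set \<Rightarrow> 'd config set \<Rightarrow> bool" where
  "bottom_scc A X \<longleftrightarrow> X \<noteq> {} \<and> (\<forall>x\<in>X. reach_set A x = X)"

definition live :: "'d action set \<Rightarrow> 'd config \<Rightarrow> bool" where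
  "live A x \<longleftrightarrow> (\<forall>a\<in>A. \<forall>x'. reach A x x' \<longrightarrow> (\<exists>y. reach A x' y \<and> fst a \<le> y))"

definition structurally_live :: "'d action set \<Rightarrow> bool" where
  "structurally_live A \<longleftrightarrow> (\<exists>x. live A x)"

inductive_set finite_sums :: "('d \<Rightarrow> int) set \<Rightarrow> ('d \<Rightarrow> int) set" for S where
  zero: "(\<lambda>_. 0) \<in> finite_sums S"
| add: "s \<in> S \<Longrightarrow> t \<in> finite_sums S \<Longrightarrow> (\<lambda>i. s i + t i) \<in> finite_sums S"

definition reversible :: "'d action set \<Rightarrow> bool" where
  "reversible A \<longleftrightarrow> (\<forall>a\<in>A. (\<lambda>i. - delta a i) \<in> finite_sums (delta ` A))"

end

theory Submission
  imports Defs "HOL-Library.FuncSet"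
begin

text \<open>Conservation of a positive weight confines every reachability set to a finite box, and
  a configuration of minimal reachability set inside \<open>R(x)\<close> spans a bottom SCC.  If \<open>x\<close> is
  live, every action \<open>a\<close> fires at some \<open>y\<close> of such an SCC, leading to \<open>y'\<close> in the same SCC;
  the path back from \<open>y'\<close> to \<open>y\<close> writes \<open>-\<Delta>(a)\<close> as a sum of displacements.\<close>

lemma reach_refl [simp]: "reach A x x"
  by (simp add: reach_def)

lemma reach_trans: "reach A x y \<Longrightarrow> reach A y z \<Longrightarrow> reach A x z"
  unfolding reach_def by simp

lemma step_imp_reach: "a \<in> A \<Longrightarrow> step a x y \<Longrightarrow> reach A x y"
  unfolding reach_def step_net_def by blast

lemma step_fire:
  assumes "fst a \<le> x"
  shows "step a x (\<lambda>i. x i - fst a i + snd a i)"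
  unfolding step_def
  using assms by (auto simp: le_fun_def intro!: exI[of _ "\<lambda>i. x i - fst a i"])

lemma reach_set_mono: "reach A x y \<Longrightarrow> reach_set A y \<subseteq> reach_set A x"
  by (auto simp: reach_set_def intro: reach_trans)

lemma reach_displacement_in_finite_sums:
  assumes "reach A x y"
  shows "(\<lambda>i. int (y i) - int (x i)) \<in> finite_sums (delta ` A)"
  using assms unfolding reach_def
proof (induction rule: converse_rtranclp_induct)
  case base
  then show ?case using finite_sums.zero by simp
next
  case (step x z)
  then obtain a c where a: "a \<in> A" and x: "x = (\<lambda>i. c i + fst a i)"
      and z: "z = (\<lambda>i. c i + snd a i)"
    unfolding step_net_def step_def by blast
  have "(\<lambda>i. delta a i + (int (y i) - int (z i))) \<in> finite_sums (delta ` A)"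
    using finite_sums.add[OF imageI[OF a] step.IH] by simp
  moreover have "(\<lambda>i. delta a i + (int (y i) - int (z i))) = (\<lambda>i. int (y i) - int (x i))"
    using x z by (auto simp: delta_def)
  ultimately show ?case by simp
qed

definition weight :: "('d::finite \<Rightarrow> nat) \<Rightarrow> 'd config \<Rightarrow> nat" where
  "weight w x = (\<Sum>i\<in>UNIV. w i * x i)"

lemma step_weight:
  assumes "step a x y"
  shows "int (weight w y) = int (weight w x) + (\<Sum>i\<in>UNIV. delta a i * int (w i))"
proof -
  obtain c where x: "x = (\<lambda>i. c i + fst a i)" and y: "y = (\<lambda>i. c i + snd a i)"
    using assms unfolding step_def by blast
  have "int (weight w y) - int (weight w x) = (\<Sum>i\<in>UNIV. delta a i * int (w i))"
    unfolding weight_def of_nat_sum sum_subtractf[symmetric] using x y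
    by (intro sum.cong) (auto simp: delta_def algebra_simps)
  then show ?thesis by simp
qed

lemma reach_weight:
  assumes "\<forall>a\<in>A. (\<Sum>i\<in>UNIV. delta a i * int (w i)) = 0" and "reach A x y"
  shows "weight w y = weight w x"
  using assms(2) unfolding reach_def
proof (induction rule: rtranclp_induct)
  case (step y z)
  then obtain a where "a \<in> A" and "step a y z"
    unfolding step_net_def by blast
  then show ?case using step_weight[of a y z w] assms(1) step.IH by simp
qed simp

lemma finite_weight_le:
  assumes "\<forall>i. w i > 0"
  shows "finite {x. weight w x \<le> N}"
proof (rule finite_subset)
  show "{x. weight w x \<le> N} \<subseteq> PiE UNIV (\<lambda>_. {..N})"
  proof
    fix x assume x: "x \<in> {x. weight w x \<le> N}"
    have "x i \<le> N" for i
    proof -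
      have "x i \<le> w i * x i" using assms by (simp add: Suc_le_eq)
      also have "\<dots> \<le> weight w x" unfolding weight_def by (rule member_le_sum) auto
      finally show ?thesis using x by simp
    qed
    then show "x \<in> PiE UNIV (\<lambda>_. {..N})" by auto
  qed
qed (simp add: finite_PiE)

lemma finite_reach_set_if_conservative:
  assumes "conservative A"
  shows "finite (reach_set A x)"
proof -
  obtain w where pos: "\<forall>i. w i > 0"
    and cons: "\<forall>a\<in>A. (\<Sum>i\<in>UNIV. delta a i * int (w i)) = 0"
    using assms unfolding conservative_def by blast
  have "reach_set A x \<subseteq> {y. weight w y \<le> weight w x}"
    using reach_weight[OF cons] by (auto simp: reach_set_def)
  then show ?thesis using finite_weight_le[OF pos] by (rule finite_subset)
qed

lemma bottom_scc_in_finite_reach_set: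
  assumes "finite (reach_set A x)"
  obtains X where "bottom_scc A X" and "X \<subseteq> reach_set A x"
proof -
  obtain y where y: "reach A x y"
    and min: "\<And>z. reach A x z \<Longrightarrow> card (reach_set A y) \<le> card (reach_set A z)"
    using ex_has_least_nat[of "reach A x" x "\<lambda>y. card (reach_set A y)"] by auto
  have same: "reach_set A z = reach_set A y" if "reach A y z" for z
  proof (rule card_seteq)
    show "finite (reach_set A y)"
      using assms reach_set_mono[OF y] by (rule finite_subset[rotated])
    show "reach_set A z \<subseteq> reach_set A y" using that by (rule reach_set_mono)
    show "card (reach_set A y) \<le> card (reach_set A z)"
      using min reach_trans[OF y that] by blast
  qed
  have "bottom_scc A (reach_set A y)"
    unfolding bottom_scc_def
  proof (intro conjI ballI)
    show "reach_set A y \<noteq> {}" unfolding reach_set_def using reach_refl by blast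
    show "reach_set A z = reach_set A y" if "z \<in> reach_set A y" for z
      using that by (intro same) (simp add: reach_set_def)
  qed
  then show thesis using reach_set_mono[OF y] by (rule that)
qed

lemma bottom_scc_reach_back:
  assumes "bottom_scc A X" and "y \<in> X" and "reach A y z"
  shows "z \<in> X" and "reach A z y"
  using assms unfolding bottom_scc_def reach_set_def by blast+

lemma live_enables_in_bottom_scc:
  assumes "live A x" and "bottom_scc A X" and "X \<subseteq> reach_set A x" and "a \<in> A"
  obtains y where "y \<in> X" and "fst a \<le> y"
proof -
  obtain z where z: "z \<in> X" using assms(2) unfolding bottom_scc_def by blast
  then have "reach A x z" using assms(3) by (auto simp: reach_set_def)
  then obtain y where "reach A z y" and "fst a \<le> y"
    using assms(1,4) unfolding live_def by blast
  then show thesis using bottom_scc_reach_back(1)[OF assms(2) z] that by blast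
qed

lemma reversible_if_bottom_scc_enables_all:
  assumes X: "bottom_scc A X" and enabled: "\<forall>a\<in>A. \<exists>y\<in>X. fst a \<le> y"
  shows "reversible A"
  unfolding reversible_def
proof
  fix a assume a: "a \<in> A"
  then obtain y where y: "y \<in> X" and "fst a \<le> y" using enabled by blast
  define y' where "y' = (\<lambda>i. y i - fst a i + snd a i)"
  have "step a y y'" unfolding y'_def using \<open>fst a \<le> y\<close> by (rule step_fire)
  then have "reach A y' y"
    using bottom_scc_reach_back(2)[OF X y] step_imp_reach[OF a] by blast
  then have "(\<lambda>i. int (y i) - int (y' i)) \<in> finite_sums (delta ` A)"
    by (rule reach_displacement_in_finite_sums)
  moreover have "(\<lambda>i. int (y i) - int (y' i)) = (\<lambda>i. - delta a i)"
  proof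
    fix i
    have "fst a i \<le> y i" using \<open>fst a \<le> y\<close> by (simp add: le_fun_def)
    then show "int (y i) - int (y' i) = - delta a i" by (simp add: y'_def delta_def)
  qed
  ultimately show "(\<lambda>i. - delta a i) \<in> finite_sums (delta ` A)" by simp
qed

theorem proposition7:
  fixes A :: "('d::finite) action set"
  assumes "finite A" and "conservative A"
  shows "(\<forall>x. finite (reach_set A x) \<and> (\<exists>X. bottom_scc A X \<and> X \<subseteq> reach_set A x))
         \<and> (structurally_live A \<longrightarrow> reversible A)"
proof (intro conjI allI impI)
  fix x
  show fin: "finite (reach_set A x)"
    using assms(2) by (rule finite_reach_set_if_conservative)
  show "\<exists>X. bottom_scc A X \<and> X \<subseteq> reach_set A x"
    using bottom_scc_in_finite_reach_set[OF fin] by blast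
next
  assume "structurally_live A"
  then obtain x where live: "live A x" unfolding structurally_live_def by blast
  obtain X where X: "bottom_scc A X" and sub: "X \<subseteq> reach_set A x"
    using bottom_scc_in_finite_reach_set finite_reach_set_if_conservative[OF assms(2)] by blast
  have "\<forall>a\<in>A. \<exists>y\<in>X. fst a \<le> y"
    using live_enables_in_bottom_scc[OF live X sub] by blast
  with X show "reversible A" by (rule reversible_if_bottom_scc_enables_all)
qed

end
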